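(* Let $(\lambda,\vartheta,\zeta_0)$ be fluid model data as in the context with $z_0>0$. Then there exists a fluid model solution $z^*(\cdot)$ (with $z^*(0)=z_0$) which is maximal: for every fluid model solution $z(\cdot)$ with $z(0)=z_0$, $z(t)\le z^*(t)$ for all $t\ge0$.
   Context: $\overline{\mathbb R}_+=[0,\infty]$. Fluid model data: $\lambda>0$; $\vartheta$ a Borel probability measure on $\overline{\mathbb R}_+^2$ with $\vartheta(\{0\}\times\overline{\mathbb R}_+)=\vartheta(\overline{\mathbb R}_+\times\{0\})=\vartheta(\{(\infty,\infty)\})=0$, $(B,D)$ a random pair with law $\vartheta$, $\rho=\lambda\mathbf E[B]>1$; $\zeta_0$ a finite nonnegative Borel measure on $\overline{\mathbb R}_+^2$ with marginals free of atoms in $[0,\infty)$ and total mass $z_0$; $(B^0,D^0)$ has law $\zeta_0/z_0$. A fluid model solution is a continuous function $z:[0,\infty)\to[0,\infty)$ with $\inf_{t>a}z(t)>0$ for all $a>0$ satisfying $z(t)=z_0\mathbf P(B^0>S(0,t);D^0>t)+\lambda\int_0^t\mathbf P(B>S(s,t);D>t-s)ds$ for $t\ge0$, where $S(u,v)=\int_u^vz(s)^{-1}ds$. *)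

theory Defs
  imports "HOL-Probability.Probability"
begin

definition fluid_data ::
  "real \<Rightarrow> (ennreal \<times> ennreal) measure \<Rightarrow> (ennreal \<times> ennreal) measure \<Rightarrow> bool" where
  "fluid_data lam \<theta> \<zeta>0 \<longleftrightarrow>
     lam > 0 \<and>
     sets \<theta> = sets borel \<and> prob_space \<theta> \<and>
     emeasure \<theta> ({0} \<times> UNIV) = 0 \<and> emeasure \<theta> (UNIV \<times> {0}) = 0 \<and>
     emeasure \<theta> {(\<infinity>, \<infinity>)} = 0 \<and>
     ennreal lam * (\<integral>\<^sup>+ x. fst x \<partial>\<theta>) > 1 \<and>
     sets \<zeta>0 = sets borel \<and> finite_measure \<zeta>0 \<and>
     (\<forall>x. x \<noteq> \<infinity> \<longrightarrow> emeasure \<zeta>0 ({x} \<times> UNIV) = 0) \<and>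
     (\<forall>x. x \<noteq> \<infinity> \<longrightarrow> emeasure \<zeta>0 (UNIV \<times> {x}) = 0)"

definition total_mass :: "(ennreal \<times> ennreal) measure \<Rightarrow> real" where
  "total_mass \<zeta>0 = measure \<zeta>0 (space \<zeta>0)"

definition Sfun :: "(real \<Rightarrow> real) \<Rightarrow> real \<Rightarrow> real \<Rightarrow> real" where
  "Sfun z u v = integral {u..v} (\<lambda>s. 1 / z s)"

text \<open>z0 P(B0 > S(0,t); D0 > t) = \<zeta>0{(b,d). b > S(0,t), d > t};
  P(B > S(s,t); D > t - s) = \<theta>{(b,d). b > S(s,t), d > t - s}.\<close>
definition fluid_solution ::
  "real \<Rightarrow> (ennreal \<times> ennreal) measure \<Rightarrow> (ennreal \<times> ennreal) measure \<Rightarrow> (real \<Rightarrow> real) \<Rightarrow> bool" where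
  "fluid_solution lam \<theta> \<zeta>0 z \<longleftrightarrow>
     continuous_on {0..} z \<and> (\<forall>t\<ge>0. z t \<ge> 0) \<and>
     (\<forall>a>0. \<exists>c>0. \<forall>t>a. z t \<ge> c) \<and>
     (\<forall>t\<ge>0. z t =
        measure \<zeta>0 {x. ennreal (Sfun z 0 t) < fst x \<and> ennreal t < snd x}
        + lam * integral {0..t}
            (\<lambda>s. measure \<theta> {x. ennreal (Sfun z s t) < fst x \<and> ennreal (t - s) < snd x}))"

end

(*
  Let \<Phi> send a candidate z to the right-hand side of the fluid equation. A larger z slows down
  the attained service S, so more jobs survive: \<Phi> is monotone. Moreover \<Phi> z t \<le> z0 + \<lambda> t for
  every z. Hence the iterates of \<Phi> started at z0 + \<lambda> t decrease and stay above every solution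
  with z(0) = z0. Because \<rho> > 1, \<Phi> preserves being above a positive step function (z0/2 up to a
  small time, when the initial jobs are still present, and a small constant afterwards, which
  the arrivals sustain), so the iterates are bounded away from zero. Monotone and dominated
  convergence then show that their limit is a fixed point of \<Phi>, i.e. the maximal solution.
  Passing to the limit under the quadrant measures needs that the boundary lines of
  {b > S(s,t), d > t - s} carry mass for only countably many s.
*)

theory Submission
  imports Defs
begin

section \<open>Quadrant measures\<close>

definition quadrant :: "ennreal \<Rightarrow> ennreal \<Rightarrow> (ennreal \<times> ennreal) set" where
  "quadrant p q = {p<..} \<times> {q<..}"

lemma mem_quadrant [simp]: "x \<in> quadrant p q \<longleftrightarrow> p < fst x \<and> q < snd x"
  by (cases x) (simp add: quadrant_def)

lemma Collect_eq_quadrant: "{x. p < fst x \<and> q < snd x} = quadrant p q"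
  by auto

lemma quadrant_in_sets [measurable]: "sets M = sets borel \<Longrightarrow> quadrant p q \<in> sets M"
  unfolding quadrant_def by (simp add: borel_open open_Times)

lemma lines_in_sets:
  assumes "sets M = sets borel"
  shows "{x::ennreal \<times> ennreal. fst x = p} \<in> sets M" "{x::ennreal \<times> ennreal. snd x = q} \<in> sets M"
  using assms by (simp_all add: borel_closed closed_Collect_eq continuous_on_fst continuous_on_snd)

lemma quadrant_antimono: "p' \<le> p \<Longrightarrow> q' \<le> q \<Longrightarrow> quadrant p q \<subseteq> quadrant p' q'"
  by (auto intro: le_less_trans)

lemma measure_quadrant_antimono:
  assumes "finite_measure M" "sets M = sets borel" "p' \<le> p" "q' \<le> q"
  shows "measure M (quadrant p q) \<le> measure M (quadrant p' q')"
  using assms by (intro finite_measure.finite_measure_mono quadrant_antimono quadrant_in_sets)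

lemma measure_quadrant_le_space:
  assumes "finite_measure M" "sets M = sets borel"
  shows "measure M (quadrant p q) \<le> measure M (space M)"
  using assms by (simp add: finite_measure.bounded_measure)

lemma eventually_less_iff_tendsto:
  fixes r :: "nat \<Rightarrow> 'a::linorder_topology"
  assumes "r \<longlonglongrightarrow> r0" "y \<noteq> r0"
  shows "\<forall>\<^sub>F n in sequentially. r n < y \<longleftrightarrow> r0 < y"
proof (cases "r0 < y")
  case True
  then show ?thesis
    using order_tendstoD(2)[OF assms(1) True] by (auto elim: eventually_mono)
next
  case False
  then have "y < r0"
    using assms(2) by (simp add: not_less order.order_iff_strict)
  then show ?thesis
    using order_tendstoD(1)[OF assms(1) \<open>y < r0\<close>] False by (auto elim: eventually_mono)
qed

lemma tendsto_measure_quadrant: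
  fixes M :: "(ennreal \<times> ennreal) measure"
  assumes M: "finite_measure M" "sets M = sets borel"
    and p: "p \<longlonglongrightarrow> p0" and q: "q \<longlonglongrightarrow> q0"
    and null_p: "emeasure M {x. fst x = p0} = 0" and null_q: "emeasure M {x. snd x = q0} = 0"
  shows "(\<lambda>n. measure M (quadrant (p n) (q n))) \<longlonglongrightarrow> measure M (quadrant p0 q0)"
proof -
  interpret finite_measure M by fact
  have null: "{x. fst x = p0} \<in> null_sets M" "{x. snd x = q0} \<in> null_sets M"
    using null_p null_q lines_in_sets[OF M(2)] by (simp_all add: null_setsI)
  have lim: "AE x in M. (\<lambda>n. indicator (quadrant (p n) (q n)) x :: real) \<longlonglongrightarrow> indicator (quadrant p0 q0) x"
    using AE_not_in[OF null(1)] AE_not_in[OF null(2)]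
  proof eventually_elim
    case (elim x)
    have "\<forall>\<^sub>F n in sequentially. x \<in> quadrant (p n) (q n) \<longleftrightarrow> x \<in> quadrant p0 q0"
      using eventually_conj[OF eventually_less_iff_tendsto[OF p, of "fst x"]
          eventually_less_iff_tendsto[OF q, of "snd x"]] elim
      by (auto elim!: eventually_mono)
    then show ?case
      by (intro tendsto_eventually) (auto elim!: eventually_mono simp: indicator_def)
  qed
  have "(\<lambda>n. integral\<^sup>L M (indicator (quadrant (p n) (q n)))) \<longlonglongrightarrow>
      (integral\<^sup>L M (indicator (quadrant p0 q0)) :: real)"
    by (rule integral_dominated_convergence[where w="\<lambda>_. 1"]) (use M(2) lim in \<open>auto simp: indicator_def\<close>)
  then show ?thesis
    using M(2) by simp
qed

lemma measure_quadrant_zero: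
  fixes M :: "(ennreal \<times> ennreal) measure"
  assumes "sets M = sets borel" "emeasure M {x. fst x = 0} = 0" "emeasure M {x. snd x = 0} = 0"
  shows "measure M (quadrant 0 0) = measure M (space M)"
proof -
  have "quadrant 0 0 = space M - ({x. fst x = 0} \<union> {x. snd x = 0})"
    using sets_eq_imp_space_eq[OF assms(1)] by (auto simp: not_gr_zero)
  moreover have "{x. fst x = 0} \<union> {x. snd x = 0} \<in> null_sets M"
    using assms lines_in_sets[OF assms(1)] by (intro null_sets.Un null_setsI)
  ultimately show ?thesis
    by (simp add: measure_Diff_null_set)
qed

section \<open>Convergence of integrals of quadrant measures\<close>

lemma countable_imp_negligible: "countable (A :: real set) \<Longrightarrow> negligible A"
  using negligible_countable_Union[of "(\<lambda>x. {x}) ` A"] by auto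

lemma (in finite_measure) countable_atoms_distr:
  fixes f :: "'a \<Rightarrow> 'b::t1_space"
  assumes "f \<in> M \<rightarrow>\<^sub>M borel"
  shows "countable {e. measure M (f -` {e} \<inter> space M) \<noteq> 0}"
proof -
  interpret D: finite_measure "distr M borel f"
    using assms by (rule finite_measure_distr)
  show ?thesis
    using D.countable_support assms by (simp add: measure_distr)
qed

lemma negligible_charged_level_sets:
  fixes M :: "(ennreal \<times> ennreal) measure" and f :: "ennreal \<times> ennreal \<Rightarrow> ennreal"
    and \<sigma> :: "real \<Rightarrow> real"
  assumes "finite_measure M" "sets M = sets borel" "continuous_on UNIV f"
    and "inj_on \<sigma> A" "\<And>s. s \<in> A \<Longrightarrow> 0 \<le> \<sigma> s"
  shows "negligible {s \<in> A. measure M {x. f x = ennreal (\<sigma> s)} \<noteq> 0}"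
proof (rule countable_imp_negligible, rule countable_image_inj_on[of "\<lambda>s. ennreal (\<sigma> s)"])
  have "f \<in> M \<rightarrow>\<^sub>M borel"
    using assms(3) by (simp add: measurable_cong_sets[OF assms(2) refl] borel_measurable_continuous_onI)
  then have "countable {e. measure M (f -` {e} \<inter> space M) \<noteq> 0}"
    by (rule finite_measure.countable_atoms_distr[OF assms(1)])
  moreover have "f -` {e} \<inter> space M = {x. f x = e}" for e
    using sets_eq_imp_space_eq[OF assms(2)] by auto
  ultimately show "countable ((\<lambda>s. ennreal (\<sigma> s)) ` {s \<in> A. measure M {x. f x = ennreal (\<sigma> s)} \<noteq> 0})"
    by (auto elim!: countable_subset[rotated])
  show "inj_on (\<lambda>s. ennreal (\<sigma> s)) {s \<in> A. measure M {x. f x = ennreal (\<sigma> s)} \<noteq> 0}"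
    using assms(4,5) by (auto simp: inj_on_def)
qed

lemma integral_zero_extension:
  fixes f :: "real \<Rightarrow> real"
  assumes "negligible E" "b \<le> T"
  shows "integral {a..T} (\<lambda>s. if s \<in> E then 0 else if s \<in> {a..b} then f s else 0) = integral {a..b} f"
proof -
  have "integral {a..T} (\<lambda>s. if s \<in> E then 0 else if s \<in> {a..b} then f s else 0)
      = integral {a..T} (\<lambda>s. if s \<in> {a..b} then f s else 0)"
    by (rule integral_spike[OF assms(1)]) simp
  also have "\<dots> = integral {a..b} f"
    using assms(2) by (subst integral_restrict_Int) (simp add: Int_absorb2)
  finally show ?thesis .
qed

lemma integrable_zero_extension:
  fixes f :: "real \<Rightarrow> real"
  assumes "f integrable_on {a..b}" "negligible E" "b \<le> T"
  shows "(\<lambda>s. if s \<in> E then 0 else if s \<in> {a..b} then f s else 0) integrable_on {a..T}"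
proof (rule integrable_spike[OF _ assms(2)])
  show "(\<lambda>s. if s \<in> {a..b} then f s else 0) integrable_on {a..T}"
    using assms(1,3) by (subst integrable_restrict_Int) (simp add: Int_absorb2)
qed simp

lemma tendsto_integral_moving_endpoint:
  fixes f :: "nat \<Rightarrow> real \<Rightarrow> real"
  assumes t: "t' \<longlonglongrightarrow> t" and E: "negligible E"
    and int: "\<And>n. f n integrable_on {a..t' n}"
    and bound: "\<And>n s. s \<in> {a..t' n} \<Longrightarrow> \<bar>f n s\<bar> \<le> B"
    and conv: "\<And>s. s \<in> {a..<t} - E \<Longrightarrow> (\<lambda>n. f n s) \<longlonglongrightarrow> g s"
  shows "(\<lambda>n. integral {a..t' n} (f n)) \<longlonglongrightarrow> integral {a..t} g"
proof -
  obtain K where "\<And>n. norm (t' n) \<le> K"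
    using t convergent_imp_Bseq[of t'] unfolding convergent_def Bseq_def by blast
  then obtain T where T: "\<And>n. t' n \<le> T" "t \<le> T"
    by (metis abs_le_D1 max.cobounded1 max.cobounded2 order.trans real_norm_def)
  define F where "F n s = (if s \<in> E \<union> {t} then 0 else if s \<in> {a..t' n} then f n s else 0)" for n s
  define G where "G s = (if s \<in> E \<union> {t} then 0 else if s \<in> {a..t} then g s else 0)" for s
  have E': "negligible (E \<union> {t})"
    using E by simp
  have F_eq: "integral {a..T} (F n) = integral {a..t' n} (f n)" for n
    unfolding F_def by (rule integral_zero_extension[OF E' T(1)])
  have G_eq: "integral {a..T} G = integral {a..t} g"
    unfolding G_def by (rule integral_zero_extension[OF E' T(2)])
  have F_int: "F n integrable_on {a..T}" for n
    unfolding F_def by (rule integrable_zero_extension[OF int E' T(1)])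
  have F_conv: "(\<lambda>n. F n s) \<longlonglongrightarrow> G s" for s
  proof (cases "s \<in> E \<union> {t}")
    case False
    have "(\<lambda>n. if s \<in> {a..t} then f n s else 0) \<longlonglongrightarrow> G s"
      using conv[of s] False by (cases "s \<in> {a..t}") (auto simp: G_def)
    moreover have "\<forall>\<^sub>F n in sequentially. (if s \<in> {a..t} then f n s else 0) = F n s"
      using eventually_less_iff_tendsto[OF t, of s] False
      by (auto simp: F_def not_less[symmetric] elim!: eventually_mono)
    ultimately show ?thesis
      by (rule Lim_transform_eventually)
  qed (simp add: F_def G_def)
  have "(\<lambda>n. integral {a..T} (F n)) \<longlonglongrightarrow> integral {a..T} G"
  proof (rule dominated_convergence(2)[where h="\<lambda>_. \<bar>B\<bar>"])
    show "norm (F n s) \<le> \<bar>B\<bar>" for n s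
      using bound[of s n] by (auto simp: F_def)
  qed (use F_int F_conv in auto)
  then show ?thesis
    using F_eq G_eq by simp
qed

lemma tendsto_integral_measure_quadrant:
  fixes M :: "(ennreal \<times> ennreal) measure" and \<sigma> :: "real \<Rightarrow> real" and t :: real
  assumes M: "finite_measure M" "sets M = sets borel"
    and t: "t' \<longlonglongrightarrow> t"
    and int: "\<And>n. (\<lambda>s. measure M (quadrant (ennreal (\<sigma>' n s)) (ennreal (t' n - s)))) integrable_on {0..t' n}"
    and conv: "\<And>s. s \<in> {0..<t} \<Longrightarrow> (\<lambda>n. \<sigma>' n s) \<longlonglongrightarrow> \<sigma> s"
    and nonneg: "\<And>s. s \<in> {0..<t} \<Longrightarrow> 0 \<le> \<sigma> s"
    and inj: "inj_on \<sigma> {0..<t}"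
  shows "(\<lambda>n. integral {0..t' n} (\<lambda>s. measure M (quadrant (ennreal (\<sigma>' n s)) (ennreal (t' n - s)))))
    \<longlonglongrightarrow> integral {0..t} (\<lambda>s. measure M (quadrant (ennreal (\<sigma> s)) (ennreal (t - s))))"
proof -
  define E where "E = {s \<in> {0..<t}. measure M {x. fst x = ennreal (\<sigma> s)} \<noteq> 0} \<union>
    {s \<in> {0..<t}. measure M {x. snd x = ennreal (t - s)} \<noteq> 0}"
  have "negligible E"
    unfolding E_def
  proof (intro negligible_Un negligible_charged_level_sets[OF M])
    show "inj_on (\<lambda>s. t - s) {0..<t}"
      by (simp add: inj_on_def)
  qed (use nonneg inj in \<open>auto intro: continuous_intros\<close>)
  then show ?thesis
  proof (rule tendsto_integral_moving_endpoint[OF t _ int])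
    show "\<bar>measure M (quadrant (ennreal (\<sigma>' n s)) (ennreal (t' n - s)))\<bar> \<le> measure M (space M)" for n s
      using measure_quadrant_le_space[OF M] by simp
    fix s assume s: "s \<in> {0..<t} - E"
    have null: "emeasure M {x. fst x = ennreal (\<sigma> s)} = 0" "emeasure M {x. snd x = ennreal (t - s)} = 0"
      using s M by (auto simp: E_def finite_measure.emeasure_eq_measure)
    show "(\<lambda>n. measure M (quadrant (ennreal (\<sigma>' n s)) (ennreal (t' n - s))))
      \<longlonglongrightarrow> measure M (quadrant (ennreal (\<sigma> s)) (ennreal (t - s)))"
      using s by (intro tendsto_measure_quadrant[OF M _ _ null] tendsto_ennrealI conv tendsto_intros t) auto
  qed
qed

section \<open>Attained service\<close>

definition admissible :: "(real \<Rightarrow> real) \<Rightarrow> bool" where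
  "admissible w \<longleftrightarrow>
     (\<forall>t\<ge>0. 0 < w t) \<and> (\<forall>u v. 0 \<le> u \<longrightarrow> (\<lambda>s. 1 / w s) integrable_on {u..v})"

lemma admissible_pos: "admissible w \<Longrightarrow> 0 \<le> t \<Longrightarrow> 0 < w t"
  unfolding admissible_def by auto

lemma admissible_integrable:
  "admissible w \<Longrightarrow> 0 \<le> u \<Longrightarrow> (\<lambda>s. 1 / w s) integrable_on {u..v}"
  unfolding admissible_def by auto

lemma admissibleI_continuous:
  assumes "continuous_on {0..} w" "\<And>t. 0 \<le> t \<Longrightarrow> 0 < w t"
  shows "admissible w"
  unfolding admissible_def
proof (intro conjI allI impI)
  fix u v :: real assume "0 \<le> u"
  then have "\<forall>s\<in>{u..v}. w s \<noteq> 0"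
    using assms(2) by (metis atLeastAtMost_iff less_irrefl order_trans)
  then have "continuous_on {u..v} (\<lambda>s. 1 / w s)"
    using \<open>0 \<le> u\<close> by (intro continuous_intros continuous_on_subset[OF assms(1)]) auto
  then show "(\<lambda>s. 1 / w s) integrable_on {u..v}"
    by (rule integrable_continuous_interval)
qed (use assms in auto)

lemma Sfun_nonneg: "admissible w \<Longrightarrow> 0 \<le> s \<Longrightarrow> 0 \<le> Sfun w s t"
  unfolding Sfun_def
  by (intro integral_nonneg admissible_integrable)
    (auto intro!: less_imp_le[OF admissible_pos[of w]])

lemma Sfun_add:
  "admissible w \<Longrightarrow> 0 \<le> r \<Longrightarrow> r \<le> s \<Longrightarrow> s \<le> t \<Longrightarrow>
    Sfun w r t = Sfun w r s + Sfun w s t"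
  unfolding Sfun_def by (metis Henstock_Kurzweil_Integration.integral_combine admissible_integrable)

lemma Sfun_le:
  assumes "admissible w" "0 < c" "\<And>x. x \<in> {s..t} \<Longrightarrow> c \<le> w x" "0 \<le> s" "s \<le> t"
  shows "Sfun w s t \<le> (t - s) / c"
proof -
  have "Sfun w s t \<le> integral {s..t} (\<lambda>_. 1 / c)"
    unfolding Sfun_def
  proof (rule integral_le[OF admissible_integrable[OF assms(1,4)] integrable_const_ivl])
    show "1 / w x \<le> 1 / c" if "x \<in> {s..t}" for x
      using assms(2) assms(3)[OF that] by (simp add: frac_le)
  qed
  then show ?thesis
    using assms(5) by simp
qed

lemma Sfun_ge:
  assumes "admissible w" "0 < B" "\<And>x. x \<in> {s..t} \<Longrightarrow> w x \<le> B" "0 \<le> s" "s \<le> t"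
  shows "(t - s) / B \<le> Sfun w s t"
proof -
  have "integral {s..t} (\<lambda>_. 1 / B) \<le> Sfun w s t"
    unfolding Sfun_def
  proof (rule integral_le[OF integrable_const_ivl admissible_integrable[OF assms(1,4)]])
    show "1 / B \<le> 1 / w x" if "x \<in> {s..t}" for x
      using that assms(3)[OF that] admissible_pos[OF assms(1), of x] assms(4) by (simp add: frac_le)
  qed
  then show ?thesis
    using assms(5) by simp
qed

lemma Sfun_antimono:
  assumes "admissible w1" "admissible w2" "\<And>x. 0 \<le> x \<Longrightarrow> w1 x \<le> w2 x" "0 \<le> s"
  shows "Sfun w2 s t \<le> Sfun w1 s t"
  unfolding Sfun_def
proof (rule integral_le[OF admissible_integrable[OF assms(2,4)] admissible_integrable[OF assms(1,4)]])
  show "1 / w2 x \<le> 1 / w1 x" if "x \<in> {s..t}" for x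
    using that assms(3)[of x] admissible_pos[OF assms(1), of x] assms(4) by (simp add: frac_le)
qed

lemma inj_on_Sfun:
  assumes "admissible w" "0 < B" "\<And>x. x \<in> {0..t} \<Longrightarrow> w x \<le> B"
  shows "inj_on (\<lambda>s. Sfun w s t) {0..<t}"
proof (rule linorder_inj_onI')
  fix i j assume ij: "i \<in> {0..<t}" "j \<in> {0..<t}" "i < j"
  have "0 < (j - i) / B"
    using ij assms(2) by simp
  also have "\<dots> \<le> Sfun w i j"
    using ij assms(3) by (intro Sfun_ge[OF assms(1,2)]) auto
  finally show "Sfun w i t \<noteq> Sfun w j t"
    using Sfun_add[OF assms(1), of i j t] ij by simp
qed

lemma isCont_Sfun:
  assumes "admissible w" "0 \<le> s"
  shows "isCont (Sfun w s) x"
proof -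
  define b where "b = max s x + 1"
  have "continuous_on {s..b} (Sfun w s)"
    unfolding Sfun_def by (intro indefinite_integral_continuous_1 admissible_integrable assms)
  moreover have "continuous_on {..s} (Sfun w s)"
    by (rule continuous_on_cong[THEN iffD1, OF refl _ continuous_on_const[of _ 0]])
      (auto simp: Sfun_def has_integral_null_real integral_unique)
  ultimately have "continuous_on ({..s} \<union> {s..b}) (Sfun w s)"
    by (intro continuous_on_closed_Un) auto
  then have "continuous_on {..<b} (Sfun w s)"
    by (rule continuous_on_subset) auto
  then show ?thesis
    using b_def by (simp add: continuous_on_eq_continuous_at)
qed

lemma tendsto_Sfun_decreasing:
  assumes adm: "\<And>n. admissible (w' n)" and c: "0 < c" "\<And>n x. 0 \<le> x \<Longrightarrow> c \<le> w' n x"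
    and dec: "\<And>n x. 0 \<le> x \<Longrightarrow> w' (Suc n) x \<le> w' n x"
    and lim: "\<And>x. 0 \<le> x \<Longrightarrow> (\<lambda>n. w' n x) \<longlonglongrightarrow> w x"
  shows "admissible w" and "0 \<le> u \<Longrightarrow> (\<lambda>n. Sfun (w' n) u v) \<longlonglongrightarrow> Sfun w u v"
proof -
  have w_ge: "c \<le> w x" if "0 \<le> x" for x
    using LIMSEQ_le_const[OF lim[OF that]] c(2)[OF that] by blast
  have mc: "(\<lambda>s. 1 / w s) integrable_on {u..v} \<and> (\<lambda>n. Sfun (w' n) u v) \<longlonglongrightarrow> Sfun w u v"
    if u: "0 \<le> u" for u v
    unfolding Sfun_def
  proof (rule monotone_convergence_increasing)
    show "(\<lambda>s. 1 / w' n s) integrable_on {u..v}" for n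
      by (rule admissible_integrable[OF adm u])
    show "1 / w' n x \<le> 1 / w' (Suc n) x" if "x \<in> {u..v}" for n x
      using that u c(1) dec[of x n] c(2)[of x "Suc n"] by (simp add: frac_le)
    show "(\<lambda>n. 1 / w' n x) \<longlonglongrightarrow> 1 / w x" if "x \<in> {u..v}" for x
      using that u c w_ge[of x] by (intro tendsto_intros lim) auto
    have "\<bar>Sfun (w' n) u v\<bar> \<le> \<bar>v - u\<bar> / c" for n
      using Sfun_nonneg[OF adm u, of n v] Sfun_le[OF adm c(1), of u v n] u c
      by (cases "u \<le> v") (auto simp: Sfun_def)
    then show "bounded (range (\<lambda>n. integral {u..v} (\<lambda>s. 1 / w' n s)))"
      unfolding bounded_iff Sfun_def by auto
  qed
  show "admissible w"
    unfolding admissible_def using mc w_ge c(1) by (auto intro: less_le_trans)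
  show "0 \<le> u \<Longrightarrow> (\<lambda>n. Sfun (w' n) u v) \<longlonglongrightarrow> Sfun w u v"
    using mc by blast
qed

section \<open>Riemann sums and truncated means\<close>

lemma riemann_sum_le_integral_mono:
  fixes f :: "real \<Rightarrow> real"
  assumes "mono_on {b - real N * h..b} f" "0 \<le> h"
  shows "(\<Sum>j=1..N. h * f (b - real j * h)) \<le> integral {b - real N * h..b} f"
  using assms(1)
proof (induction N)
  case (Suc N)
  define a where "a = b - real (Suc N) * h"
  have a_le: "a \<le> b - real N * h" "b - real N * h \<le> b"
    using assms(2) by (simp_all add: a_def algebra_simps)
  have int: "f integrable_on {a..b}"
    using Suc.prems by (simp add: a_def integrable_on_mono_on)
  have "h * f a = integral {a..b - real N * h} (\<lambda>_. f a)"
    using assms(2) by (simp add: a_def algebra_simps)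
  also have "\<dots> \<le> integral {a..b - real N * h} f"
    using Suc.prems a_le unfolding a_def[symmetric]
    by (intro integral_le integrable_subinterval_real[OF int]) (auto simp: mono_on_def)
  finally have "(\<Sum>j=1..Suc N. h * f (b - real j * h)) \<le>
      integral {a..b - real N * h} f + integral {b - real N * h..b} f"
    using Suc.IH Suc.prems a_le by (simp add: a_def mono_on_subset)
  also have "\<dots> = integral {a..b} f"
    using Henstock_Kurzweil_Integration.integral_combine[OF a_le int] by simp
  finally show ?case
    by (simp add: a_def)
qed simp

lemma riemann_sum_indicator_ge_min:
  fixes b h :: real
  assumes "0 < h"
  shows "min (b - h) (real N * h) \<le> (\<Sum>j=1..N. if real j * h < b then h else 0)"
proof (induction N)
  case (Suc N)
  then show ?case
    using assms by (auto simp: algebra_simps min_def)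
qed simp

lemma min_le_riemann_sum_ennreal:
  fixes b :: ennreal and h :: real
  assumes h: "0 < h"
  shows "min b (ennreal (real N * h)) \<le> (\<Sum>j=1..N. if ennreal (real j * h) < b then ennreal h else 0) + ennreal h"
proof (cases b)
  case (real r)
  have "(\<Sum>j=1..N. if ennreal (real j * h) < b then ennreal h else 0)
      = (\<Sum>j=1..N. ennreal (if real j * h < r then h else 0))"
    using real h by (intro sum.cong) (auto simp: ennreal_less_iff)
  also have "\<dots> = ennreal (\<Sum>j=1..N. if real j * h < r then h else 0)"
    using h by (intro sum_ennreal) auto
  finally have sum_eq: "(\<Sum>j=1..N. if ennreal (real j * h) < b then ennreal h else 0)
      = ennreal (\<Sum>j=1..N. if real j * h < r then h else 0)" .
  have "min r (real N * h) \<le> (\<Sum>j=1..N. if real j * h < r then h else 0) + h"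
    using riemann_sum_indicator_ge_min[OF h, of r N] h unfolding min_def by (auto split: if_splits)
  then have "ennreal (min r (real N * h)) \<le> ennreal ((\<Sum>j=1..N. if real j * h < r then h else 0) + h)"
    by (rule ennreal_leI)
  also have "\<dots> = ennreal (\<Sum>j=1..N. if real j * h < r then h else 0) + ennreal h"
    using h by (intro ennreal_plus sum_nonneg) auto
  finally show ?thesis
    unfolding sum_eq using real h by (simp add: min_ennreal)
next
  case top
  have "(\<Sum>j=1..N. if ennreal (real j * h) < b then ennreal h else 0) = of_nat N * ennreal h"
    using top by simp
  also have "\<dots> = ennreal (real N * h)"
    using h by (simp add: ennreal_of_nat_eq_real_of_nat ennreal_mult)
  finally show ?thesis
    using top by simp
qed

lemma truncation_le_riemann_sum:
  fixes x :: "ennreal \<times> ennreal" and h \<delta> :: real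
  assumes h: "0 < h"
  shows "(if ennreal \<delta> < snd x then min (fst x) (ennreal (real N * h)) else 0)
    \<le> (\<Sum>j=1..N. ennreal h * indicator (quadrant (ennreal (real j * h)) (ennreal \<delta>)) x) + ennreal h"
proof (cases "ennreal \<delta> < snd x")
  case True
  then have "(\<Sum>j=1..N. ennreal h * indicator (quadrant (ennreal (real j * h)) (ennreal \<delta>)) x)
      = (\<Sum>j=1..N. if ennreal (real j * h) < fst x then ennreal h else 0)"
    by (intro sum.cong) (auto simp: indicator_def)
  then show ?thesis
    using True min_le_riemann_sum_ennreal[OF h, of "fst x" N] by simp
qed simp

lemma nn_integral_truncation_le_riemann_sum:
  fixes M :: "(ennreal \<times> ennreal) measure" and h \<delta> :: real
  assumes M: "prob_space M" "sets M = sets borel" and h: "0 < h"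
  shows "(\<integral>\<^sup>+x. (if ennreal \<delta> < snd x then min (fst x) (ennreal (real N * h)) else 0) \<partial>M)
    \<le> ennreal (h * (\<Sum>j=1..N. measure M (quadrant (ennreal (real j * h)) (ennreal \<delta>))) + h)"
proof -
  interpret prob_space M by fact
  let ?A = "\<lambda>j. quadrant (ennreal (real j * h)) (ennreal \<delta>)"
  have A: "?A j \<in> sets M" for j
    by (rule quadrant_in_sets[OF M(2)])
  have "(\<integral>\<^sup>+x. (if ennreal \<delta> < snd x then min (fst x) (ennreal (real N * h)) else 0) \<partial>M)
      \<le> (\<integral>\<^sup>+x. (\<Sum>j=1..N. ennreal h * indicator (?A j) x) + ennreal h \<partial>M)"
    by (intro nn_integral_mono truncation_le_riemann_sum h)
  also have "\<dots> = (\<integral>\<^sup>+x. (\<Sum>j=1..N. ennreal h * indicator (?A j) x) \<partial>M) +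
      (\<integral>\<^sup>+x. ennreal h \<partial>M)"
    by (rule nn_integral_add) (use A in measurable)
  also have "\<dots> = (\<Sum>j=1..N. \<integral>\<^sup>+x. ennreal h * indicator (?A j) x \<partial>M) + ennreal h"
    by (subst nn_integral_sum) (use A in \<open>measurable\<close>, simp add: emeasure_space_1)
  also have "\<dots> = (\<Sum>j=1..N. ennreal (h * measure M (?A j))) + ennreal h"
    using A h by (simp add: nn_integral_cmult_indicator emeasure_eq_measure ennreal_mult)
  also have "\<dots> = ennreal (h * (\<Sum>j=1..N. measure M (?A j)) + h)"
    using h by (simp add: sum_ennreal sum_distrib_left sum_nonneg ennreal_plus)
  finally show ?thesis .
qed

lemma fst_le_SUP_truncation:
  fixes x :: "ennreal \<times> ennreal"
  assumes "snd x \<noteq> 0"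
  shows "fst x \<le> (SUP n. if ennreal (1 / Suc n) < snd x then min (fst x) (of_nat n) else 0)"
proof (rule tendsto_upperbound)
  have "(\<lambda>n. of_nat n :: ennreal) \<longlonglongrightarrow> top"
    using LIMSEQ_SUP[of "\<lambda>n. of_nat n :: ennreal"] by (simp add: incseq_def ennreal_SUP_of_nat_eq_top)
  then have min_lim: "(\<lambda>n. min (fst x) (of_nat n)) \<longlonglongrightarrow> fst x"
    using tendsto_min[OF tendsto_const, of "\<lambda>n. of_nat n" top sequentially "fst x"] by simp
  have "(\<lambda>n. ennreal (1 / Suc n)) \<longlonglongrightarrow> 0"
    using tendsto_ennrealI[OF LIMSEQ_Suc[OF lim_1_over_n]] by simp
  moreover have "0 < snd x"
    using assms by (simp add: not_gr_zero[symmetric] del: not_gr_zero)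
  ultimately have "\<forall>\<^sub>F n in sequentially. ennreal (1 / Suc n) < snd x"
    by (rule order_tendstoD(2))
  then show "(\<lambda>n. if ennreal (1 / Suc n) < snd x then min (fst x) (of_nat n) else 0) \<longlonglongrightarrow> fst x"
    by (rule Lim_transform_eventually[OF min_lim eventually_mono]) simp
  show "\<forall>\<^sub>F n in sequentially. (if ennreal (1 / Suc n) < snd x then min (fst x) (of_nat n) else 0)
      \<le> (SUP n. if ennreal (1 / Suc n) < snd x then min (fst x) (of_nat n) else 0)"
    by (intro always_eventually allI SUP_upper UNIV_I)
qed simp

lemma incseq_truncation:
  "incseq (\<lambda>n (x :: ennreal \<times> ennreal). if ennreal (1 / Suc n) < snd x then min (fst x) (of_nat n) else 0)"
proof (intro incseq_SucI le_funI)
  fix n and x :: "ennreal \<times> ennreal"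
  show "(if ennreal (1 / Suc n) < snd x then min (fst x) (of_nat n) else 0)
    \<le> (if ennreal (1 / Suc (Suc n)) < snd x then min (fst x) (of_nat (Suc n)) else 0)"
  proof (cases "ennreal (1 / Suc n) < snd x")
    case True
    have "ennreal (1 / Suc (Suc n)) \<le> ennreal (1 / Suc n)"
      by (intro ennreal_leI) (simp add: frac_le)
    then have "ennreal (1 / Suc (Suc n)) < snd x"
      using True by (rule order.strict_trans1)
    moreover have "min (fst x) (of_nat n) \<le> min (fst x) (of_nat (Suc n))"
      by (simp add: min.coboundedI2)
    ultimately show ?thesis
      using True by (simp only: if_True)
  qed simp
qed

lemma nn_integral_fst_le_SUP_truncation:
  fixes M :: "(ennreal \<times> ennreal) measure"
  assumes M: "sets M = sets borel" and null: "emeasure M {x. snd x = 0} = 0"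
  shows "(\<integral>\<^sup>+x. fst x \<partial>M)
    \<le> (SUP n. \<integral>\<^sup>+x. (if ennreal (1 / Suc n) < snd x then min (fst x) (of_nat n) else 0) \<partial>M)"
proof -
  define g where "g n x = (if ennreal (1 / Suc n) < snd x then min (fst x) (of_nat n) else 0)"
    for n and x :: "ennreal \<times> ennreal"
  have g_meas: "g n \<in> borel_measurable M" for n
    unfolding g_def measurable_cong_sets[OF M refl]
  proof (rule measurable_If)
    show "(\<lambda>x::ennreal \<times> ennreal. min (fst x) (of_nat n)) \<in> borel_measurable borel"
      by (intro borel_measurable_continuous_onI continuous_intros)
    show "{x::ennreal \<times> ennreal \<in> space borel. ennreal (1 / Suc n) < snd x} \<in> sets borel"
      by (simp add: borel_open open_Collect_less continuous_intros)
  qed simp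
  have g_inc: "incseq g"
    unfolding g_def by (rule incseq_truncation)
  have "AE x in M. snd x \<noteq> 0"
    using AE_not_in[of "{x. snd x = 0}" M] null lines_in_sets[OF M] by (simp add: null_setsI)
  then have "AE x in M. fst x \<le> (SUP n. g n x)"
    unfolding g_def by (rule eventually_mono) (rule fst_le_SUP_truncation)
  then have "(\<integral>\<^sup>+x. fst x \<partial>M) \<le> (\<integral>\<^sup>+x. (SUP n. g n x) \<partial>M)"
    by (rule nn_integral_mono_AE)
  also have "\<dots> = (SUP n. integral\<^sup>N M (g n))"
    by (rule nn_integral_monotone_convergence_SUP[OF g_inc g_meas])
  finally show ?thesis
    unfolding g_def .
qed

section \<open>The fluid map\<close>

definition survival ::
  "(ennreal \<times> ennreal) measure \<Rightarrow> (real \<Rightarrow> real) \<Rightarrow> real \<Rightarrow> real \<Rightarrow> real" where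
  "survival M w s t = measure M (quadrant (ennreal (Sfun w s t)) (ennreal (t - s)))"

definition fluid_map ::
  "real \<Rightarrow> (ennreal \<times> ennreal) measure \<Rightarrow> (ennreal \<times> ennreal) measure \<Rightarrow>
    (real \<Rightarrow> real) \<Rightarrow> real \<Rightarrow> real" where
  "fluid_map lam \<theta> \<zeta>0 w t = survival \<zeta>0 w 0 t + lam * integral {0..t} (\<lambda>s. survival \<theta> w s t)"

lemma fluid_solution_iff:
  "fluid_solution lam \<theta> \<zeta>0 z \<longleftrightarrow>
     continuous_on {0..} z \<and> (\<forall>t\<ge>0. z t \<ge> 0) \<and> (\<forall>a>0. \<exists>c>0. \<forall>t>a. z t \<ge> c) \<and>
     (\<forall>t\<ge>0. z t = fluid_map lam \<theta> \<zeta>0 z t)"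
  by (simp add: fluid_solution_def fluid_map_def survival_def Collect_eq_quadrant)

lemma survival_le_space:
  "finite_measure M \<Longrightarrow> sets M = sets borel \<Longrightarrow> survival M w s t \<le> measure M (space M)"
  unfolding survival_def by (rule measure_quadrant_le_space)

lemma survival_mono:
  assumes "finite_measure M" "sets M = sets borel" "admissible w" "0 \<le> s1" "s1 \<le> s2" "s2 \<le> t"
  shows "survival M w s1 t \<le> survival M w s2 t"
  unfolding survival_def
proof (rule measure_quadrant_antimono[OF assms(1,2)])
  show "ennreal (Sfun w s2 t) \<le> ennreal (Sfun w s1 t)"
    using Sfun_add[OF assms(3-6)] Sfun_nonneg[OF assms(3,4), of s2] by (intro ennreal_leI) simp
qed (use assms in \<open>simp add: ennreal_leI\<close>)

lemma survival_integrable: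
  "finite_measure M \<Longrightarrow> sets M = sets borel \<Longrightarrow> admissible w \<Longrightarrow>
    (\<lambda>s. survival M w s t) integrable_on {0..t}"
  by (intro integrable_on_mono_on mono_onI survival_mono) auto

lemma survival_antimono:
  assumes "finite_measure M" "sets M = sets borel" "admissible w1" "admissible w2"
    "\<And>x. 0 \<le> x \<Longrightarrow> w1 x \<le> w2 x" "0 \<le> s"
  shows "survival M w1 s t \<le> survival M w2 s t"
  unfolding survival_def
  using Sfun_antimono[OF assms(3-6)] by (intro measure_quadrant_antimono[OF assms(1,2)] ennreal_leI) auto

lemma measure_quadrant_le_survival:
  assumes "finite_measure M" "sets M = sets borel" "admissible w" "0 < c"
    "\<And>x. x \<in> {s..t} \<Longrightarrow> c \<le> w x" "0 \<le> s" "s \<le> t" "t - s \<le> \<delta>"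
  shows "measure M (quadrant (ennreal ((t - s) / c)) (ennreal \<delta>)) \<le> survival M w s t"
  unfolding survival_def using Sfun_le[OF assms(3-7)] assms(8)
  by (intro measure_quadrant_antimono[OF assms(1,2)] ennreal_leI) auto

lemma tendsto_integral_survival:
  assumes M: "finite_measure M" "sets M = sets borel"
    and adm: "\<And>n. admissible (w' n)" "admissible w"
    and bound: "\<And>x. x \<in> {0..t} \<Longrightarrow> w x \<le> B"
    and t: "t' \<longlonglongrightarrow> t"
    and conv: "\<And>s. s \<in> {0..<t} \<Longrightarrow> (\<lambda>n. Sfun (w' n) s (t' n)) \<longlonglongrightarrow> Sfun w s t"
  shows "(\<lambda>n. integral {0..t' n} (\<lambda>s. survival M (w' n) s (t' n)))
    \<longlonglongrightarrow> integral {0..t} (\<lambda>s. survival M w s t)"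
  unfolding survival_def
proof (rule tendsto_integral_measure_quadrant[OF M t _ conv])
  show "(\<lambda>s. measure M (quadrant (ennreal (Sfun (w' n) s (t' n))) (ennreal (t' n - s)))) integrable_on {0..t' n}" for n
    using survival_integrable[OF M adm(1)] unfolding survival_def .
  show "inj_on (\<lambda>s. Sfun w s t) {0..<t}"
    using bound by (intro inj_on_Sfun[OF adm(2), of "max B 1"]) force+
qed (use Sfun_nonneg[OF adm(2)] in auto)

lemma admissible_fluid_solution:
  assumes "fluid_solution lam \<theta> \<zeta>0 z" "0 < z 0"
  shows "admissible z"
proof (rule admissibleI_continuous)
  show "continuous_on {0..} z"
    using assms(1) by (simp add: fluid_solution_def)
  show "0 < z t" if "0 \<le> t" for t
  proof (cases "t = 0")
    case False
    then have "0 < t / 2" "t / 2 < t"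
      using that by simp_all
    moreover have "\<forall>a>0. \<exists>c>0. \<forall>s>a. c \<le> z s"
      using assms(1) unfolding fluid_solution_def by (elim conjE)
    ultimately obtain c where "0 < c" "c \<le> z t"
      by blast
    then show ?thesis
      by linarith
  qed (use assms(2) in simp)
qed

locale fluid =
  fixes lam :: real and \<theta> \<zeta>0 :: "(ennreal \<times> ennreal) measure"
  assumes data: "fluid_data lam \<theta> \<zeta>0"
begin

abbreviation \<Phi> where "\<Phi> \<equiv> fluid_map lam \<theta> \<zeta>0"

abbreviation total_input :: "real \<Rightarrow> real" where "total_input t \<equiv> total_mass \<zeta>0 + lam * t"

lemma lam_pos: "0 < lam"
  and theta: "prob_space \<theta>" "finite_measure \<theta>" "sets \<theta> = sets borel"
  and zeta: "finite_measure \<zeta>0" "sets \<zeta>0 = sets borel"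
  using data prob_space.finite_measure unfolding fluid_data_def by auto

lemma zeta_lines_null:
  "emeasure \<zeta>0 {x. fst x = ennreal r} = 0" "emeasure \<zeta>0 {x. snd x = ennreal r} = 0"
proof -
  have "{x. fst x = ennreal r} = {ennreal r} \<times> UNIV" "{x. snd x = ennreal r} = UNIV \<times> {ennreal r}"
    by auto
  moreover have "emeasure \<zeta>0 ({ennreal r} \<times> UNIV) = 0" "emeasure \<zeta>0 (UNIV \<times> {ennreal r}) = 0"
    using data unfolding fluid_data_def by auto
  ultimately show "emeasure \<zeta>0 {x. fst x = ennreal r} = 0" "emeasure \<zeta>0 {x. snd x = ennreal r} = 0"
    by metis+
qed

lemma theta_snd_null: "emeasure \<theta> {x. snd x = 0} = 0"
proof -
  have "{x. snd x = 0} = UNIV \<times> {0::ennreal}"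
    by auto
  moreover have "emeasure \<theta> (UNIV \<times> {0}) = 0"
    using data unfolding fluid_data_def by blast
  ultimately show ?thesis
    by metis
qed

lemma fluid_map_at_0: "\<Phi> w 0 = total_mass \<zeta>0"
  using measure_quadrant_zero[OF zeta(2)] zeta_lines_null[of 0]
  by (simp add: fluid_map_def survival_def Sfun_def total_mass_def)

lemma fluid_map_le:
  assumes "admissible w" "0 \<le> t"
  shows "\<Phi> w t \<le> total_input t"
proof -
  have "integral {0..t} (\<lambda>s. survival \<theta> w s t) \<le> integral {0..t} (\<lambda>_. 1)"
    using survival_le_space[OF theta(2,3)] prob_space.prob_space[OF theta(1)]
    by (intro integral_le survival_integrable[OF theta(2,3) assms(1)]) auto
  moreover have "survival \<zeta>0 w 0 t \<le> total_mass \<zeta>0"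
    unfolding total_mass_def by (rule survival_le_space[OF zeta])
  ultimately show ?thesis
    using assms(2) lam_pos unfolding fluid_map_def by (simp add: mult_left_mono add_mono)
qed

lemma fluid_map_mono:
  assumes "admissible w1" "admissible w2" "\<And>x. 0 \<le> x \<Longrightarrow> w1 x \<le> w2 x" "0 \<le> t"
  shows "\<Phi> w1 t \<le> \<Phi> w2 t"
proof -
  have "integral {0..t} (\<lambda>s. survival \<theta> w1 s t) \<le> integral {0..t} (\<lambda>s. survival \<theta> w2 s t)"
    using assms(1,2) survival_antimono[OF theta(2,3) assms(1-3)]
    by (intro integral_le survival_integrable[OF theta(2,3)]) auto
  then show ?thesis
    using survival_antimono[OF zeta assms(1-3), of 0 t] lam_pos
    unfolding fluid_map_def by (simp add: mult_left_mono add_mono)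
qed

lemma continuous_on_fluid_map:
  assumes adm: "admissible w" and bounded: "\<And>t. \<exists>B. \<forall>x\<in>{0..t}. w x \<le> B"
  shows "continuous_on {0..} (\<Phi> w)"
proof (rule continuous_on_sequentiallyI)
  fix u and a :: real assume "\<forall>n. u n \<in> {0..}" "a \<in> {0..}" and ua: "u \<longlonglongrightarrow> a"
  have Sfun_conv: "(\<lambda>n. Sfun w s (u n)) \<longlonglongrightarrow> Sfun w s a" if "0 \<le> s" for s
    by (rule isCont_tendsto_compose[OF isCont_Sfun[OF adm that] ua])
  have "(\<lambda>n. survival \<zeta>0 w 0 (u n)) \<longlonglongrightarrow> survival \<zeta>0 w 0 a"
    unfolding survival_def
    by (intro tendsto_measure_quadrant[OF zeta _ _ zeta_lines_null] tendsto_ennrealI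
        Sfun_conv tendsto_intros ua) simp
  moreover obtain B where "\<forall>x\<in>{0..a}. w x \<le> B"
    using bounded by blast
  then have "(\<lambda>n. integral {0..u n} (\<lambda>s. survival \<theta> w s (u n)))
      \<longlonglongrightarrow> integral {0..a} (\<lambda>s. survival \<theta> w s a)"
    using Sfun_conv by (intro tendsto_integral_survival[OF theta(2,3) adm adm _ ua]) auto
  ultimately show "(\<lambda>n. \<Phi> w (u n)) \<longlonglongrightarrow> \<Phi> w a"
    unfolding fluid_map_def by (intro tendsto_intros)
qed

lemma tendsto_fluid_map_decreasing:
  assumes adm: "\<And>n. admissible (w' n)" and c: "0 < c" "\<And>n x. 0 \<le> x \<Longrightarrow> c \<le> w' n x"
    and dec: "\<And>n x. 0 \<le> x \<Longrightarrow> w' (Suc n) x \<le> w' n x"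
    and lim: "\<And>x. 0 \<le> x \<Longrightarrow> (\<lambda>n. w' n x) \<longlonglongrightarrow> w x"
    and bounded: "\<And>x. x \<in> {0..t} \<Longrightarrow> w x \<le> B"
  shows "(\<lambda>n. \<Phi> (w' n) t) \<longlonglongrightarrow> \<Phi> w t"
proof -
  note Sfun_conv = tendsto_Sfun_decreasing(2)[OF adm c dec lim]
  have "(\<lambda>n. survival \<zeta>0 (w' n) 0 t) \<longlonglongrightarrow> survival \<zeta>0 w 0 t"
    unfolding survival_def
    by (intro tendsto_measure_quadrant[OF zeta _ _ zeta_lines_null] tendsto_ennrealI Sfun_conv) simp_all
  moreover have "(\<lambda>n. integral {0..t} (\<lambda>s. survival \<theta> (w' n) s t))
      \<longlonglongrightarrow> integral {0..t} (\<lambda>s. survival \<theta> w s t)"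
    using tendsto_integral_survival[OF theta(2,3) adm tendsto_Sfun_decreasing(1)[OF adm c dec lim]
        bounded tendsto_const, of t] Sfun_conv
    by simp
  ultimately show ?thesis
    unfolding fluid_map_def by (intro tendsto_intros)
qed

section \<open>A positive lower barrier\<close>

lemma exists_truncated_mean:
  "\<exists>n e. 1 < lam * e \<and> e \<le> real n \<and>
     (\<integral>\<^sup>+x. (if ennreal (1 / Suc n) < snd x then min (fst x) (of_nat n) else 0) \<partial>\<theta>) = ennreal e"
proof -
  define g where "g n x = (if ennreal (1 / Suc n) < snd x then min (fst x) (of_nat n) else 0)"
    for n and x :: "ennreal \<times> ennreal"
  have "1 < ennreal lam * (\<integral>\<^sup>+x. fst x \<partial>\<theta>)"
    using data unfolding fluid_data_def by blast
  also have "\<dots> \<le> ennreal lam * (SUP n. integral\<^sup>N \<theta> (g n))"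
    using nn_integral_fst_le_SUP_truncation[OF theta(3) theta_snd_null]
    unfolding g_def by (rule mult_left_mono) simp
  finally obtain n where n: "1 < ennreal lam * integral\<^sup>N \<theta> (g n)"
    by (auto simp: SUP_mult_left_ennreal less_SUP_iff)
  have "integral\<^sup>N \<theta> (g n) \<le> (\<integral>\<^sup>+x. of_nat n \<partial>\<theta>)"
    by (intro nn_integral_mono) (simp add: g_def)
  then obtain e where e: "integral\<^sup>N \<theta> (g n) = ennreal e" "0 \<le> e" "e \<le> real n"
    using prob_space.emeasure_space_1[OF theta(1)]
    by (cases "integral\<^sup>N \<theta> (g n)") (auto simp: ennreal_of_nat_eq_real_of_nat top_unique)
  have "1 < lam * e"
    using n e(1,2) lam_pos
    by (simp add: ennreal_mult[symmetric] ennreal_1[symmetric] ennreal_less_iff del: ennreal_1)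
  then show ?thesis
    using e unfolding g_def by blast
qed

text \<open>A lower Riemann sum for \<open>\<lambda> \<integral> P(B > u, D > \<delta>) du\<close> over \<open>[0, N h]\<close>; it tends to
  \<open>\<rho> = \<lambda> E B > 1\<close> as \<open>h, \<delta> \<rightarrow> 0\<close> and \<open>N h \<rightarrow> \<infinity>\<close>.\<close>
lemma supercritical_riemann_sum:
  "\<exists>h N \<delta>. 0 < h \<and> 0 < \<delta> \<and>
     1 \<le> lam * h * (\<Sum>j=1..N. measure \<theta> (quadrant (ennreal (real j * h)) (ennreal \<delta>)))"
proof -
  obtain n e where lam_e: "1 < lam * e" and e_le: "e \<le> real n"
    and e: "(\<integral>\<^sup>+x. (if ennreal (1 / Suc n) < snd x then min (fst x) (of_nat n) else 0) \<partial>\<theta>) = ennreal e"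
    using exists_truncated_mean by blast
  have "0 < real n"
    using lam_e e_le lam_pos by (smt (verit) mult_nonneg_nonpos)
  obtain N where N: "lam * real n / (lam * e - 1) < real N"
    using reals_Archimedean2 by blast
  have "0 < lam * real n / (lam * e - 1)"
    using \<open>0 < real n\<close> lam_e lam_pos by simp
  then have N_pos: "0 < real N"
    using N by linarith
  define h where "h = real n / real N"
  have h: "0 < h" "real N * h = real n" "lam * h < lam * e - 1"
    using \<open>0 < real n\<close> N_pos N lam_e lam_pos by (auto simp: h_def field_simps)
  let ?S = "\<Sum>j=1..N. measure \<theta> (quadrant (ennreal (real j * h)) (ennreal (1 / Suc n)))"
  have "(\<lambda>x. if ennreal (1 / Suc n) < snd x then min (fst x) (of_nat n) else 0)
      = (\<lambda>x. if ennreal (1 / Suc n) < snd x then min (fst x) (ennreal (real N * h)) else 0)"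
    using h(2) by (simp add: fun_eq_iff ennreal_of_nat_eq_real_of_nat)
  then have "ennreal e \<le> ennreal (h * ?S + h)"
    using nn_integral_truncation_le_riemann_sum[OF theta(1,3) h(1), of "1 / Suc n" N]
    unfolding e[symmetric] by simp
  moreover have "0 \<le> h * ?S + h"
    using h(1) by (simp add: sum_nonneg)
  ultimately have "e \<le> h * ?S + h"
    using ennreal_le_iff by blast
  then have "1 \<le> lam * h * ?S"
    using h(3) lam_pos by (smt (verit) mult_left_mono distrib_left mult.assoc)
  then show ?thesis
    using h(1) by (intro exI[of _ h] exI[of _ N] exI[of _ "1 / Suc n"]) auto
qed

lemma initial_mass_bound:
  assumes "0 < a" "a < total_mass \<zeta>0"
  shows "\<exists>t0>0. a \<le> measure \<zeta>0 (quadrant (ennreal (t0 / a)) (ennreal t0))"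
proof -
  have eps: "(\<lambda>n. 1 / real (Suc n)) \<longlonglongrightarrow> 0"
    using LIMSEQ_Suc[OF lim_1_over_n] by simp
  have "(\<lambda>n. measure \<zeta>0 (quadrant (ennreal (1 / Suc n / a)) (ennreal (1 / Suc n))))
      \<longlonglongrightarrow> measure \<zeta>0 (quadrant (ennreal 0) (ennreal 0))"
    by (intro tendsto_measure_quadrant[OF zeta _ _ zeta_lines_null] tendsto_ennrealI
        tendsto_divide_zero eps)
  then have "(\<lambda>n. measure \<zeta>0 (quadrant (ennreal (1 / Suc n / a)) (ennreal (1 / Suc n))))
      \<longlonglongrightarrow> total_mass \<zeta>0"
    using measure_quadrant_zero[OF zeta(2)] zeta_lines_null[of 0] by (simp add: total_mass_def)
  from order_tendstoD(1)[OF this assms(2)] obtain n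
    where "a < measure \<zeta>0 (quadrant (ennreal (1 / Suc n / a)) (ennreal (1 / Suc n)))"
    by (auto simp: eventually_sequentially)
  then show ?thesis
    by (intro exI[of _ "1 / Suc n"]) auto
qed

lemma fluid_map_ge_initial:
  assumes "admissible w" "0 < a" "\<And>x. x \<in> {0..t0} \<Longrightarrow> a \<le> w x" "0 \<le> t" "t \<le> t0"
  shows "measure \<zeta>0 (quadrant (ennreal (t0 / a)) (ennreal t0)) \<le> \<Phi> w t"
proof -
  have "Sfun w 0 t \<le> t / a"
    using Sfun_le[OF assms(1,2), of 0 t] assms(3-5) by simp
  also have "\<dots> \<le> t0 / a"
    using assms(2,5) by (simp add: divide_right_mono)
  finally have "measure \<zeta>0 (quadrant (ennreal (t0 / a)) (ennreal t0)) \<le> survival \<zeta>0 w 0 t"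
    unfolding survival_def using assms(5) by (intro measure_quadrant_antimono[OF zeta] ennreal_leI) auto
  moreover have "0 \<le> integral {0..t} (\<lambda>s. survival \<theta> w s t)"
    by (intro integral_nonneg survival_integrable[OF theta(2,3) assms(1)]) (simp add: survival_def)
  ultimately show ?thesis
    using lam_pos unfolding fluid_map_def by (smt (verit) mult_nonneg_nonneg)
qed

lemma fluid_map_ge_arrivals:
  assumes adm: "admissible w" and c: "0 < c" "\<And>x. 0 \<le> x \<Longrightarrow> c \<le> w x"
    and h: "0 < h" "c * (real N * h) \<le> \<delta>" "c * (real N * h) \<le> t"
    and R: "1 \<le> lam * h * (\<Sum>j=1..N. measure \<theta> (quadrant (ennreal (real j * h)) (ennreal \<delta>)))"
  shows "c \<le> \<Phi> w t"
proof -
  define k where "k = c * h"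
  have k: "0 < k" "real N * k \<le> t" "real N * k \<le> \<delta>"
    using c(1) h by (simp_all add: k_def mult.left_commute)
  have each: "measure \<theta> (quadrant (ennreal (real j * h)) (ennreal \<delta>)) \<le> survival \<theta> w (t - real j * k) t"
    if "j \<in> {1..N}" for j
  proof -
    have "real j * k \<le> real N * k" "0 \<le> real j * k"
      using that k(1) by (auto intro: mult_right_mono)
    then have "0 \<le> t - real j * k" "t - real j * k \<le> t" "t - (t - real j * k) \<le> \<delta>"
      using k by linarith+
    moreover have "(t - (t - real j * k)) / c = real j * h"
      using c(1) by (simp add: k_def)
    ultimately show ?thesis
      using measure_quadrant_le_survival[OF theta(2,3) adm c(1), of "t - real j * k" t \<delta>] c(2) by auto
  qed
  have int: "(\<lambda>s. survival \<theta> w s t) integrable_on {0..t}"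
    by (rule survival_integrable[OF theta(2,3) adm])
  have "c \<le> c * (lam * h * (\<Sum>j=1..N. measure \<theta> (quadrant (ennreal (real j * h)) (ennreal \<delta>))))"
    using R c(1) by simp
  also have "\<dots> = lam * (\<Sum>j=1..N. k * measure \<theta> (quadrant (ennreal (real j * h)) (ennreal \<delta>)))"
    by (simp add: k_def sum_distrib_left algebra_simps)
  also have "\<dots> \<le> lam * (\<Sum>j=1..N. k * survival \<theta> w (t - real j * k) t)"
    using each k(1) lam_pos by (intro mult_left_mono sum_mono) auto
  also have "\<dots> \<le> lam * integral {t - real N * k..t} (\<lambda>s. survival \<theta> w s t)"
    using k lam_pos
    by (intro mult_left_mono riemann_sum_le_integral_mono mono_onI survival_mono[OF theta(2,3) adm]) auto
  also have "\<dots> \<le> lam * integral {0..t} (\<lambda>s. survival \<theta> w s t)"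
    using k(2) lam_pos
    by (intro mult_left_mono integral_subset_le integrable_subinterval_real[OF int])
      (auto simp: survival_def)
  also have "\<dots> \<le> \<Phi> w t"
    by (simp add: fluid_map_def survival_def)
  finally show ?thesis .
qed

definition lower_barrier :: "(real \<Rightarrow> real) \<Rightarrow> bool" where
  "lower_barrier \<phi> \<longleftrightarrow> (\<exists>c>0. \<forall>x. c \<le> \<phi> x) \<and> (\<forall>x\<ge>0. \<phi> x \<le> total_input x) \<and>
     (\<forall>w t. admissible w \<and> (\<forall>x\<ge>0. \<phi> x \<le> w x) \<and> 0 \<le> t \<longrightarrow> \<phi> t \<le> \<Phi> w t)"

lemma lower_barrierD:
  assumes "lower_barrier \<phi>"
  shows "\<exists>c>0. \<forall>x. c \<le> \<phi> x" and "0 \<le> x \<Longrightarrow> \<phi> x \<le> total_input x"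
    and "admissible w \<Longrightarrow> (\<And>x. 0 \<le> x \<Longrightarrow> \<phi> x \<le> w x) \<Longrightarrow> 0 \<le> t \<Longrightarrow>
      \<phi> t \<le> \<Phi> w t"
  using assms unfolding lower_barrier_def by blast+

lemma step_lower_barrier:
  assumes c: "0 < c" "c \<le> a" "a \<le> total_mass \<zeta>0"
    and initial: "a \<le> measure \<zeta>0 (quadrant (ennreal (t0 / a)) (ennreal t0))"
    and arrivals: "0 < h" "c * (real N * h) \<le> \<delta>" "c * (real N * h) \<le> t0"
      "1 \<le> lam * h * (\<Sum>j=1..N. measure \<theta> (quadrant (ennreal (real j * h)) (ennreal \<delta>)))"
  shows "lower_barrier (\<lambda>x. if x \<le> t0 then a else c)"
proof -
  let ?\<phi> = "\<lambda>x. if x \<le> t0 then a else c"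
  have c_le: "c \<le> ?\<phi> x" for x
    using c(2) by simp
  have "?\<phi> t \<le> \<Phi> w t" if adm: "admissible w" and below: "\<forall>x\<ge>0. ?\<phi> x \<le> w x" and "0 \<le> t" for w t
  proof (cases "t \<le> t0")
    case True
    have "a \<le> w x" if "x \<in> {0..t0}" for x
      using below that by auto
    moreover have "0 < a"
      using c(1,2) by linarith
    ultimately show ?thesis
      using fluid_map_ge_initial[OF adm, of a t0 t] initial \<open>0 \<le> t\<close> True by simp
  next
    case False
    have "c \<le> w x" if "0 \<le> x" for x
      using below c_le that by (meson order_trans)
    then show ?thesis
      using fluid_map_ge_arrivals[OF adm c(1) _ arrivals(1,2) _ arrivals(4)] arrivals(3) False by simp
  qed
  moreover have "?\<phi> x \<le> total_input x" if "0 \<le> x" for x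
    using that c lam_pos by (simp add: mult_nonneg_nonneg add_increasing2 order_trans[of c a])
  ultimately show ?thesis
    unfolding lower_barrier_def using c(1) c_le by blast
qed

lemma exists_lower_barrier:
  assumes "0 < total_mass \<zeta>0"
  shows "\<exists>\<phi>. lower_barrier \<phi>"
proof -
  obtain h N \<delta> where h: "0 < h" and \<delta>: "0 < \<delta>"
    and R: "1 \<le> lam * h * (\<Sum>j=1..N. measure \<theta> (quadrant (ennreal (real j * h)) (ennreal \<delta>)))"
    using supercritical_riemann_sum by blast
  define a where "a = total_mass \<zeta>0 / 2"
  have a: "0 < a" "a < total_mass \<zeta>0"
    using assms by (simp_all add: a_def)
  then obtain t0 where t0: "0 < t0" "a \<le> measure \<zeta>0 (quadrant (ennreal (t0 / a)) (ennreal t0))"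
    using initial_mass_bound by blast
  define V where "V = real N * h"
  have V: "0 \<le> V"
    using h by (simp add: V_def)
  define c where "c = min a (min (\<delta> / (V + 1)) (t0 / (V + 1)))"
  have c: "0 < c" "c \<le> a" "c * V \<le> \<delta>" "c * V \<le> t0"
  proof -
    have "c * V \<le> x / (V + 1) * (V + 1)" if "c \<le> x / (V + 1)" "0 \<le> x" for x
      using that V by (intro mult_mono) auto
    then show "c * V \<le> \<delta>" "c * V \<le> t0"
      using V \<delta> t0(1) by (auto simp: c_def)
  qed (use a \<delta> t0 V in \<open>auto simp: c_def\<close>)
  then have "lower_barrier (\<lambda>x. if x \<le> t0 then a else c)"
    using a(2) by (intro step_lower_barrier[OF _ _ _ t0(2) h _ _ R]) (auto simp: V_def)
  then show ?thesis
    by blast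
qed

section \<open>The maximal solution\<close>

definition iterate :: "nat \<Rightarrow> real \<Rightarrow> real" where
  "iterate n = (\<Phi> ^^ n) total_input"

definition maximal_solution :: "real \<Rightarrow> real" where
  "maximal_solution x = (INF n. iterate n x)"

lemma total_input_mono: "x \<le> t \<Longrightarrow> total_input x \<le> total_input t"
  using lam_pos by simp

lemma iterate_0: "iterate 0 = total_input"
  and iterate_Suc: "iterate (Suc n) = \<Phi> (iterate n)"
  by (simp_all add: iterate_def)

lemma iterate_invariant:
  assumes "lower_barrier \<phi>"
  shows "admissible (iterate n) \<and> (\<forall>x\<ge>0. \<phi> x \<le> iterate n x \<and> iterate n x \<le> total_input x)"
proof (induction n)
  case 0
  obtain c where "0 < c" "\<And>x. c \<le> \<phi> x"
    using lower_barrierD(1)[OF assms] by blast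
  then have "0 < total_input t" if "0 \<le> t" for t
    using lower_barrierD(2)[OF assms that] by (smt (verit))
  then have "admissible total_input"
    by (intro admissibleI_continuous continuous_intros)
  then show ?case
    using lower_barrierD(2)[OF assms] by (simp add: iterate_0)
next
  case (Suc n)
  then have adm: "admissible (iterate n)" and below: "\<forall>x\<ge>0. \<phi> x \<le> iterate n x"
    and above: "\<And>x. 0 \<le> x \<Longrightarrow> iterate n x \<le> total_input x"
    by auto
  obtain c where c: "0 < c" "\<And>x. c \<le> \<phi> x"
    using lower_barrierD(1)[OF assms] by blast
  have barrier: "\<phi> t \<le> \<Phi> (iterate n) t" if "0 \<le> t" for t
    using lower_barrierD(3)[OF assms adm _ that] below by blast
  moreover have "\<exists>B. \<forall>x\<in>{0..t}. iterate n x \<le> B" for t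
    using above total_input_mono by (meson atLeastAtMost_iff order_trans)
  then have "continuous_on {0..} (\<Phi> (iterate n))"
    by (rule continuous_on_fluid_map[OF adm])
  moreover have "0 < \<Phi> (iterate n) t" if "0 \<le> t" for t
    using c(1) c(2)[of t] barrier[OF that] by linarith
  ultimately have "admissible (\<Phi> (iterate n))"
    by (intro admissibleI_continuous)
  then show ?case
    using barrier fluid_map_le[OF adm] by (simp add: iterate_Suc)
qed

lemma iterate_decreasing:
  assumes "lower_barrier \<phi>" "0 \<le> x"
  shows "iterate (Suc n) x \<le> iterate n x"
  using assms(2)
proof (induction n arbitrary: x)
  case 0
  then show ?case
    using fluid_map_le iterate_invariant[OF assms(1), of 0] by (simp add: iterate_Suc iterate_0)
next
  case (Suc n)
  have "\<Phi> (iterate (Suc n)) x \<le> \<Phi> (iterate n) x"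
    using iterate_invariant[OF assms(1)] by (intro fluid_map_mono Suc.IH Suc.prems) blast+
  then show ?case
    by (simp add: iterate_Suc)
qed

lemma tendsto_iterate:
  assumes "lower_barrier \<phi>" "0 \<le> x"
  shows "(\<lambda>n. iterate n x) \<longlonglongrightarrow> maximal_solution x"
proof -
  obtain c where "\<And>x. c \<le> \<phi> x"
    using lower_barrierD(1)[OF assms(1)] by blast
  then have "bdd_below (range (\<lambda>n. iterate n x))"
    using iterate_invariant[OF assms(1)] assms(2) by (meson bdd_belowI2 order_trans)
  then show ?thesis
    unfolding maximal_solution_def
    by (intro LIMSEQ_decseq_INF decseq_SucI iterate_decreasing[OF assms])
qed

lemma solution_le_maximal_solution:
  assumes "lower_barrier \<phi>" "fluid_solution lam \<theta> \<zeta>0 z" "z 0 = total_mass \<zeta>0" "0 < total_mass \<zeta>0"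
    and "0 \<le> x"
  shows "z x \<le> maximal_solution x"
proof -
  have adm: "admissible z"
    using admissible_fluid_solution[OF assms(2)] assms(3,4) by simp
  have fixed: "z t = \<Phi> z t" if "0 \<le> t" for t
    using assms(2) that by (simp add: fluid_solution_iff)
  have "z x \<le> iterate n x" if "0 \<le> x" for n x
    using that
  proof (induction n arbitrary: x)
    case 0
    then show ?case
      using fixed fluid_map_le[OF adm] by (simp add: iterate_0)
  next
    case (Suc n)
    have "\<Phi> z x \<le> \<Phi> (iterate n) x"
      using iterate_invariant[OF assms(1)] by (intro fluid_map_mono adm Suc.IH Suc.prems) blast
    then show ?case
      using fixed[OF Suc.prems] by (simp add: iterate_Suc)
  qed
  then show ?thesis
    using LIMSEQ_le_const[OF tendsto_iterate[OF assms(1,5)]] assms(5) by blast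
qed

lemma maximal_solution_bounds:
  assumes "lower_barrier \<phi>" "0 \<le> x"
  shows "\<phi> x \<le> maximal_solution x" and "maximal_solution x \<le> total_input x"
  using LIMSEQ_le_const[OF tendsto_iterate[OF assms]] LIMSEQ_le_const2[OF tendsto_iterate[OF assms]]
    iterate_invariant[OF assms(1)] assms(2) by blast+

lemma fluid_map_maximal_solution:
  assumes "lower_barrier \<phi>"
  shows "admissible maximal_solution" and "0 \<le> t \<Longrightarrow> \<Phi> maximal_solution t = maximal_solution t"
proof -
  obtain c where c: "0 < c" "\<And>x. c \<le> \<phi> x"
    using lower_barrierD(1)[OF assms] by blast
  note inv = iterate_invariant[OF assms] and lim = tendsto_iterate[OF assms]
  have lower: "c \<le> iterate n x" if "0 \<le> x" for n x
    using c(2)[of x] inv[of n] that by force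
  note limit = tendsto_Sfun_decreasing(1) tendsto_fluid_map_decreasing
  note limit = limit[where w' = iterate, OF _ c(1) lower iterate_decreasing[OF assms] lim]
  show "admissible maximal_solution"
    using inv by (intro limit(1)) blast
  assume "0 \<le> t"
  show "\<Phi> maximal_solution t = maximal_solution t"
  proof (rule LIMSEQ_unique)
    have "maximal_solution x \<le> total_input t" if "x \<in> {0..t}" for x
      using maximal_solution_bounds(2)[OF assms] total_input_mono that by (meson atLeastAtMost_iff order_trans)
    then show "(\<lambda>n. \<Phi> (iterate n) t) \<longlonglongrightarrow> \<Phi> maximal_solution t"
      using inv by (intro limit(2)) blast+
    show "(\<lambda>n. \<Phi> (iterate n) t) \<longlonglongrightarrow> maximal_solution t"
      using LIMSEQ_Suc[OF lim[OF \<open>0 \<le> t\<close>]] by (simp add: iterate_Suc)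
  qed
qed

lemma fluid_solution_maximal_solution:
  assumes "lower_barrier \<phi>"
  shows "fluid_solution lam \<theta> \<zeta>0 maximal_solution" and "maximal_solution 0 = total_mass \<zeta>0"
proof -
  note fixed = fluid_map_maximal_solution(2)[OF assms]
  obtain c where c: "0 < c" "\<And>x. c \<le> \<phi> x"
    using lower_barrierD(1)[OF assms] by blast
  have "\<exists>B. \<forall>x\<in>{0..t}. maximal_solution x \<le> B" for t
    using maximal_solution_bounds(2)[OF assms] total_input_mono by (meson atLeastAtMost_iff order_trans)
  then have "continuous_on {0..} (\<Phi> maximal_solution)"
    by (rule continuous_on_fluid_map[OF fluid_map_maximal_solution(1)[OF assms]])
  then have "continuous_on {0..} maximal_solution"
    by (rule continuous_on_cong[THEN iffD1, OF refl, rotated]) (simp add: fixed)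
  moreover have "c \<le> maximal_solution x" if "0 \<le> x" for x
    using c(2)[of x] maximal_solution_bounds(1)[OF assms that] by linarith
  ultimately show "fluid_solution lam \<theta> \<zeta>0 maximal_solution"
    unfolding fluid_solution_iff using c(1) fixed by (smt (verit))
  show "maximal_solution 0 = total_mass \<zeta>0"
    using fixed[of 0] fluid_map_at_0 by simp
qed

end

theorem mainTheorem6:
  fixes lam :: real and \<theta> \<zeta>0 :: "(ennreal \<times> ennreal) measure"
  assumes "fluid_data lam \<theta> \<zeta>0"
    and "total_mass \<zeta>0 > 0"
  shows "\<exists>zs. fluid_solution lam \<theta> \<zeta>0 zs \<and> zs 0 = total_mass \<zeta>0 \<and>
           (\<forall>z. fluid_solution lam \<theta> \<zeta>0 z \<and> z 0 = total_mass \<zeta>0 \<longrightarrow>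
                (\<forall>t\<ge>0. z t \<le> zs t))"
proof -
  interpret fluid lam \<theta> \<zeta>0
    by (rule fluid.intro) (rule assms(1))
  obtain \<phi> where \<phi>: "lower_barrier \<phi>"
    using exists_lower_barrier[OF assms(2)] by blast
  show ?thesis
    using fluid_solution_maximal_solution[OF \<phi>] solution_le_maximal_solution[OF \<phi> _ _ assms(2)]
    by blast
qed

end
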